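(* Let $G$ be a bipartite graph on $[n]\times[n]'$ with two edge colors, whose red edges form a perfect matching ($n$ red edges) and whose blue edges are generated as a bipartite Erdős–Rényi graph with edge probability $D/n$. If $n\ge525$ and $D\ge256\log(32e)$, then with probability at least $1-\exp(-Dn/2^{14})$, $G$ contains at least $\exp(n/20)$ distinct alternating cycles of length at least $3n/4$.
   Context: An alternating cycle is a cycle in $G$ whose edges alternate between red and blue. *)

theory Defs
  imports "HOL-Probability.Probability"
begin

text \<open>Vertices of the bipartite graph on [n] x [n]': left vertices Inl i, right vertices Inr j,
  with i, j in {0..<n}.  Colours: True = red, False = blue.
  Red edges: the perfect matching {Inl i, Inr (sigma i)}.  Blue edges: pairs (i,j) in B,
  meaning the edge {Inl i, Inr j}.\<close>

definition bip_vertices :: "nat \<Rightarrow> (nat + nat) set" where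
  "bip_vertices n = Inl ` {..<n} \<union> Inr ` {..<n}"

definition col_edge :: "(nat \<Rightarrow> nat) \<Rightarrow> (nat \<times> nat) set \<Rightarrow> bool \<Rightarrow> nat + nat \<Rightarrow> nat + nat \<Rightarrow> bool" where
  "col_edge \<sigma> B c u v \<longleftrightarrow>
     (\<exists>i j. {u, v} = {Inl i, Inr j} \<and> (if c then j = \<sigma> i else (i, j) \<in> B))"

definition alt_cycle :: "nat \<Rightarrow> (nat \<Rightarrow> nat) \<Rightarrow> (nat \<times> nat) set \<Rightarrow> (nat + nat) list \<Rightarrow> bool list \<Rightarrow> bool" where
  "alt_cycle n \<sigma> B vs cs \<longleftrightarrow>
     length cs = length vs \<and> length vs \<ge> 3 \<and> distinct vs \<and> set vs \<subseteq> bip_vertices n \<and>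
     (\<forall>t < length vs. col_edge \<sigma> B (cs ! t) (vs ! t) (vs ! ((t + 1) mod length vs))) \<and>
     (\<forall>t < length vs. cs ! ((t + 1) mod length vs) \<noteq> cs ! t)"

text \<open>A cycle, as a subgraph, is identified with its set of coloured edges.\<close>

definition cycle_edges :: "(nat + nat) list \<Rightarrow> bool list \<Rightarrow> (bool \<times> (nat + nat) set) set" where
  "cycle_edges vs cs = {(cs ! t, {vs ! t, vs ! ((t + 1) mod length vs)}) | t. t < length vs}"

definition long_alt_cycles :: "nat \<Rightarrow> (nat \<Rightarrow> nat) \<Rightarrow> (nat \<times> nat) set \<Rightarrow> real \<Rightarrow> (bool \<times> (nat + nat) set) set set" where
  "long_alt_cycles n \<sigma> B L =
     {cycle_edges vs cs | vs cs. alt_cycle n \<sigma> B vs cs \<and> real (length vs) \<ge> L}"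

text \<open>Bipartite Erdos-Renyi random graph: each pair in [n] x [n] independently with probability D/n
  (bernoulli_pmf clamps the parameter to [0,1]).\<close>

definition bip_ER :: "nat \<Rightarrow> real \<Rightarrow> (nat \<times> nat \<Rightarrow> bool) pmf" where
  "bip_ER n D = Pi_pmf ({..<n} \<times> {..<n}) False (\<lambda>_. bernoulli_pmf (D / real n))"

end

theory Submission
  imports Defs
begin

text \<open>Read the blue edges through the red matching as a digraph on [n], with an arc i \<rightarrow> j
  whenever (i, \<sigma> j) is blue: a directed cycle c_0 \<rightarrow> c_1 \<rightarrow> ... then lifts to an alternating
  cycle of twice its length.  For k = n div 40 + 1, a union bound over pairs of k-sets shows that
  with the stated probability any two disjoint k-sets are joined by an arc.  In such a digraph a
  depth-first search in a vertex set W finds a path through all but 2k - 1 vertices of W, and an arc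
  from its last k back to its first k vertices closes a cycle of length at least |W| - 4k + 3.
  Running this in each of the 2^(n div 2) sets that pick one vertex from every pair {2j, 2j + 1}
  and counting how often a cycle can be found again yields 2^(n div 2 + 3 - 4k) \<ge> exp (n / 20)
  distinct long alternating cycles.\<close>

section \<open>Long cycles in k-joined digraphs\<close>

definition dpath :: "('v \<Rightarrow> 'v \<Rightarrow> bool) \<Rightarrow> 'v list \<Rightarrow> bool" where
  "dpath a p \<longleftrightarrow> distinct p \<and> successively a p"

definition dcycle :: "('v \<Rightarrow> 'v \<Rightarrow> bool) \<Rightarrow> 'v list \<Rightarrow> bool" where
  "dcycle a c \<longleftrightarrow>
     distinct c \<and> 2 \<le> length c \<and> (\<forall>t<length c. a (c ! t) (c ! ((t + 1) mod length c)))"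

definition k_joined :: "nat \<Rightarrow> 'v set \<Rightarrow> ('v \<Rightarrow> 'v \<Rightarrow> bool) \<Rightarrow> bool" where
  "k_joined k W a \<longleftrightarrow> (\<forall>S T. S \<subseteq> W \<longrightarrow> T \<subseteq> W \<longrightarrow> card S = k \<longrightarrow> card T = k \<longrightarrow>
      S \<inter> T = {} \<longrightarrow> (\<exists>s\<in>S. \<exists>t\<in>T. a s t))"

lemma k_joined_subset: "k_joined k V a \<Longrightarrow> W \<subseteq> V \<Longrightarrow> k_joined k W a"
  unfolding k_joined_def by (metis subset_trans)

lemma k_joined_pos: "k_joined k W a \<Longrightarrow> 0 < k"
  unfolding k_joined_def by (metis card.empty empty_iff empty_subsetI inf_bot_left neq0_conv)

lemma k_joined_card_less:
  assumes "k_joined k W a" "S \<subseteq> W" "T \<subseteq> W" "S \<inter> T = {}" "\<forall>s\<in>S. \<forall>t\<in>T. \<not> a s t"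
    and "card S \<le> card T"
  shows "card S < k"
proof (rule ccontr)
  assume "\<not> card S < k"
  then obtain S' T' where "S' \<subseteq> S" "card S' = k" "T' \<subseteq> T" "card T' = k"
    using assms(6) by (metis dual_order.strict_trans ex_card linorder_not_less neqE)
  moreover from this have "S' \<subseteq> W" "T' \<subseteq> W" "S' \<inter> T' = {}"
    using assms(2-4) by auto
  ultimately obtain s t where "s \<in> S'" "t \<in> T'" "a s t"
    using assms(1) unfolding k_joined_def by blast
  then show False
    using assms(5) \<open>S' \<subseteq> S\<close> \<open>T' \<subseteq> T\<close> by blast
qed

text \<open>A depth-first search in W keeps the finished vertices in S, the current path in the
  stack U and the unvisited vertices in T; it never leaves an arc from S to T.\<close>

definition dfs_state ::
    "'v set \<Rightarrow> ('v \<Rightarrow> 'v \<Rightarrow> bool) \<Rightarrow> 'v set \<Rightarrow> 'v list \<Rightarrow> 'v set \<Rightarrow> bool" where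
  "dfs_state W a S U T \<longleftrightarrow> S \<union> set U \<union> T = W \<and> S \<inter> set U = {} \<and> S \<inter> T = {} \<and>
     set U \<inter> T = {} \<and> dpath a U \<and> (\<forall>s\<in>S. \<forall>t\<in>T. \<not> a s t)"

lemma dfs_state_card:
  assumes "dfs_state W a S U T" "finite W"
  shows "card W = card S + length U + card T"
proof -
  have "finite S" "finite T" "distinct U"
    using assms unfolding dfs_state_def dpath_def by auto
  with assms show ?thesis
    unfolding dfs_state_def
    by (metis card_Un_disjoint distinct_card finite_Un inf_sup_distrib2 sup_idem)
qed

lemma dfs_step:
  assumes st: "dfs_state W a S U T" and "T \<noteq> {}" "finite W"
  shows "\<exists>S' U' T'. dfs_state W a S' U' T' \<and>
    (S' = S \<and> card T' + 1 = card T \<or> card S' = card S + 1 \<and> T' = T)"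
proof (cases "\<exists>t\<in>T. U = [] \<or> a (last U) t")
  case True
  then obtain t where t: "t \<in> T" "U = [] \<or> a (last U) t" by blast
  have "dpath a (U @ [t])"
    using st t unfolding dfs_state_def dpath_def by (auto simp: successively_append_iff)
  then have "dfs_state W a S (U @ [t]) (T - {t})"
    using st t unfolding dfs_state_def by auto
  moreover have "finite T"
    using st \<open>finite W\<close> unfolding dfs_state_def by (metis finite_Un)
  then have "card (T - {t}) + 1 = card T"
    using t by (metis card.remove Suc_eq_plus1)
  ultimately show ?thesis by blast
next
  case False
  then obtain V x where U: "U = V @ [x]" and no_arc: "\<forall>t\<in>T. \<not> a x t"
    using \<open>T \<noteq> {}\<close> by (metis all_not_in_conv rev_exhaust last_snoc)
  \<comment> \<open>the top x of the stack has no arc into T, so it is finished\<close>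
  have "dpath a V" "x \<notin> set V"
    using st unfolding U dfs_state_def dpath_def by (auto simp: successively_append_iff)
  then have "dfs_state W a (insert x S) V T"
    using st no_arc unfolding U dfs_state_def by auto
  moreover have "card (insert x S) = card S + 1"
    using st \<open>finite W\<close> unfolding U dfs_state_def by auto
  ultimately show ?thesis by blast
qed

lemma dfs_long_path:
  assumes "dfs_state W a S U T" "card S \<le> card T" "finite W" "k_joined k W a"
  shows "\<exists>p. dpath a p \<and> set p \<subseteq> W \<and> card W + 1 \<le> length p + 2 * k"
  using assms(1,2)
proof (induction "card T - card S" arbitrary: S U T rule: less_induct)
  case less
  show ?case
  proof (cases "card T \<le> card S + 1")
    case True
    \<comment> \<open>the search has stalled: S is too small to be joined to T, so the stack is long\<close>
    have "card S < k"
      using less.prems assms(4) unfolding dfs_state_def by (intro k_joined_card_less) auto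
    then have "card W + 1 \<le> length U + 2 * k"
      using True dfs_state_card[OF less.prems(1) assms(3)] by linarith
    then show ?thesis
      using less.prems(1) unfolding dfs_state_def by blast
  next
    case False
    then obtain S' U' T' where "dfs_state W a S' U' T'"
      and "S' = S \<and> card T' + 1 = card T \<or> card S' = card S + 1 \<and> T' = T"
      using dfs_step[OF less.prems(1) _ assms(3)] by fastforce
    then show ?thesis
      using False by (intro less.hyps[of T' S' U']) auto
  qed
qed

lemma k_joined_long_path:
  assumes "finite W" "k_joined k W a"
  shows "\<exists>p. dpath a p \<and> set p \<subseteq> W \<and> card W + 1 \<le> length p + 2 * k"
  by (rule dfs_long_path[of W a "{}" "[]" W]) (use assms in \<open>auto simp: dfs_state_def dpath_def\<close>)

lemma dcycle_path_segment:
  assumes "dpath a p" "i < j" "j < length p" "a (p ! j) (p ! i)"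
  shows "dcycle a (take (j - i + 1) (drop i p))"
proof -
  define c where "c = take (j - i + 1) (drop i p)"
  have len: "length c = j - i + 1" and nth: "\<And>q. q < length c \<Longrightarrow> c ! q = p ! (i + q)"
    using assms(2,3) by (auto simp: c_def)
  have "a (c ! t) (c ! ((t + 1) mod length c))" if "t < length c" for t
  proof (cases "t + 1 < length c")
    case True
    then show ?thesis
      using assms(1,3) len nth by (simp add: dpath_def successively_nth)
  next
    case False
    then have "t = j - i" using that len by simp
    then show ?thesis
      using assms(2,4) len nth by simp
  qed
  moreover have "distinct c"
    using assms(1) by (simp add: c_def dpath_def)
  ultimately show ?thesis
    using assms(2) len by (simp add: dcycle_def c_def)
qed

lemma k_joined_long_cycle:
  assumes "finite W" "k_joined k W a" "4 * k \<le> card W"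
  shows "\<exists>c. dcycle a c \<and> set c \<subseteq> W \<and> card W + 3 \<le> length c + 4 * k"
proof -
  obtain p where p: "dpath a p" "set p \<subseteq> W" "card W + 1 \<le> length p + 2 * k"
    using k_joined_long_path[OF assms(1,2)] by blast
  define L where "L = length p"
  have "distinct p" "2 * k + 1 \<le> L"
    using p assms(3) by (auto simp: dpath_def L_def)
  \<comment> \<open>an arc from the last k vertices of the path back to its first k vertices closes a long cycle\<close>
  moreover have "set (take k p) \<inter> set (drop (L - k) p) = {}"
    using \<open>2 * k + 1 \<le> L\<close> by (intro set_take_disj_set_drop_if_distinct[OF \<open>distinct p\<close>]) linarith
  moreover have "set (drop (L - k) p) \<subseteq> W" "set (take k p) \<subseteq> W"
    using p(2) by (auto dest: in_set_dropD in_set_takeD)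
  moreover have "card (set (drop (L - k) p)) = k" "card (set (take k p)) = k"
    using calculation(1,2) by (simp_all add: distinct_card L_def)
  ultimately obtain s t where "s \<in> set (drop (L - k) p)" "t \<in> set (take k p)" "a s t"
    using assms(2) unfolding k_joined_def by (metis Int_commute)
  moreover obtain i where "i < k" "t = p ! i"
    using \<open>t \<in> set (take k p)\<close> by (auto simp: in_set_conv_nth)
  moreover obtain r where "r < k" "s = p ! (L - k + r)"
    using \<open>s \<in> set (drop (L - k) p)\<close> \<open>2 * k + 1 \<le> L\<close> by (auto simp: in_set_conv_nth L_def)
  ultimately obtain i j where ij: "i < k" "L - k \<le> j" "j < L" "a (p ! j) (p ! i)"
    using \<open>2 * k + 1 \<le> L\<close> by (metis add_less_cancel_left le_add1 le_add_diff_inverse2 le_trans mult_2)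
  define c where "c = take (j - i + 1) (drop i p)"
  have "dcycle a c"
    unfolding c_def using ij \<open>2 * k + 1 \<le> L\<close> p(1) by (intro dcycle_path_segment) (auto simp: L_def)
  moreover have "set c \<subseteq> W"
    using p(2) by (auto simp: c_def dest: in_set_dropD in_set_takeD)
  moreover have "length c = j - i + 1"
    using ij \<open>2 * k + 1 \<le> L\<close> by (simp add: c_def L_def)
  ultimately show ?thesis
    using ij p(3) L_def by (intro exI[of _ c]) auto
qed

section \<open>Lifting directed cycles to alternating cycles\<close>

lemma Suc_mod_double:
  fixes t l :: nat
  assumes "t < 2 * l"
  shows "(t + 1) mod (2 * l) = (if even t then t + 1 else 2 * ((t div 2 + 1) mod l))"
proof (cases "even t")
  case True
  then have "t + 1 < 2 * l"
    using assms by presburger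
  then show ?thesis
    using True by simp
next
  case False
  then have "t + 1 = 2 * (t div 2 + 1)"
    by simp
  then show ?thesis
    using False by (metis mod_mult_mult1)
qed

lemma Suc_mod_inj:
  fixes x y l :: nat
  assumes "x < l" "y < l" "(x + 1) mod l = (y + 1) mod l"
  shows "x = y"
proof -
  have "(z + 1) mod l = (if z + 1 = l then 0 else z + 1)" if "z < l" for z
    using that by auto
  then show ?thesis
    using assms by (simp split: if_splits)
qed

text \<open>A directed cycle c_0, ..., c_{l-1} along the arcs i \<rightarrow> j of (i, \<sigma> j) \<in> B lifts to the alternating cycle
  Inl c_0, Inr (\<sigma> c_1), Inl c_1, Inr (\<sigma> c_2), ..., with blue edges at even and red edges at odd positions.\<close>

definition alt_lift :: "(nat \<Rightarrow> nat) \<Rightarrow> nat list \<Rightarrow> (nat + nat) list" where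
  "alt_lift \<sigma> c = map (\<lambda>t. if even t then Inl (c ! (t div 2))
     else Inr (\<sigma> (c ! ((t div 2 + 1) mod length c)))) [0..<2 * length c]"

definition alt_colours :: "nat list \<Rightarrow> bool list" where
  "alt_colours c = map odd [0..<2 * length c]"

lemma length_alt_lift [simp]: "length (alt_lift \<sigma> c) = 2 * length c"
  by (simp add: alt_lift_def)

lemma nth_alt_lift:
  "t < 2 * length c \<Longrightarrow> alt_lift \<sigma> c ! t = (if even t then Inl (c ! (t div 2))
     else Inr (\<sigma> (c ! ((t div 2 + 1) mod length c))))"
  by (simp add: alt_lift_def)

lemma distinct_alt_lift:
  assumes "distinct c" "inj_on \<sigma> (set c)"
  shows "distinct (alt_lift \<sigma> c)"
proof -
  have "alt_lift \<sigma> c ! x \<noteq> alt_lift \<sigma> c ! y"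
    if xy: "x < 2 * length c" "y < 2 * length c" "x \<noteq> y" for x y
  proof (cases "even x = even y")
    case False
    then show ?thesis
      using xy by (auto simp: nth_alt_lift)
  next
    case True
    then have "x div 2 \<noteq> y div 2"
      using xy(3) by presburger
    moreover have "x div 2 < length c" "y div 2 < length c"
      using xy by auto
    ultimately have "(x div 2 + 1) mod length c \<noteq> (y div 2 + 1) mod length c"
      using Suc_mod_inj by blast
    moreover have "(x div 2 + 1) mod length c < length c" "(y div 2 + 1) mod length c < length c"
      using xy(1) by (auto intro: mod_less_divisor)
    ultimately show ?thesis
      using True xy assms \<open>x div 2 \<noteq> y div 2\<close> \<open>x div 2 < length c\<close> \<open>y div 2 < length c\<close>
      by (auto simp: nth_alt_lift nth_eq_iff_index_eq dest: inj_onD)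
  qed
  then show ?thesis
    by (simp add: distinct_conv_nth)
qed

lemma set_alt_lift: "set (alt_lift \<sigma> c) \<subseteq> Inl ` set c \<union> Inr ` \<sigma> ` set c"
proof
  fix v
  assume "v \<in> set (alt_lift \<sigma> c)"
  then obtain t where "t < 2 * length c" "v = alt_lift \<sigma> c ! t"
    by (auto simp: in_set_conv_nth)
  moreover have "(t div 2 + 1) mod length c < length c"
    using \<open>t < 2 * length c\<close> by (intro mod_less_divisor) linarith
  ultimately show "v \<in> Inl ` set c \<union> Inr ` \<sigma> ` set c"
    by (auto simp: nth_alt_lift)
qed

lemma Inl_in_set_alt_lift_iff: "Inl i \<in> set (alt_lift \<sigma> c) \<longleftrightarrow> i \<in> set c"
proof
  assume "i \<in> set c"
  then obtain q where "q < length c" "i = c ! q"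
    by (auto simp: in_set_conv_nth)
  then have "alt_lift \<sigma> c ! (2 * q) = Inl i" "2 * q < length (alt_lift \<sigma> c)"
    by (auto simp: nth_alt_lift)
  then show "Inl i \<in> set (alt_lift \<sigma> c)"
    by (metis nth_mem)
qed (use set_alt_lift in blast)

lemma col_edge_alt_lift:
  assumes "dcycle (\<lambda>i j. (i, \<sigma> j) \<in> B) c" "t < 2 * length c"
  shows "col_edge \<sigma> B (odd t) (alt_lift \<sigma> c ! t) (alt_lift \<sigma> c ! ((t + 1) mod (2 * length c)))"
proof (cases "even t")
  case True
  have "(c ! (t div 2), \<sigma> (c ! ((t div 2 + 1) mod length c))) \<in> B"
    using assms unfolding dcycle_def by auto
  moreover have "(t + 1) mod (2 * length c) = t + 1" "t + 1 < 2 * length c"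
    using True assms(2) Suc_mod_double[OF assms(2)] by auto
  ultimately show ?thesis
    using True assms(2) by (auto simp: nth_alt_lift col_edge_def)
next
  case False
  have "(t + 1) mod (2 * length c) = 2 * ((t div 2 + 1) mod length c)"
    "(t div 2 + 1) mod length c < length c"
    using False assms(2) Suc_mod_double[OF assms(2)] by (auto intro: mod_less_divisor)
  then show ?thesis
    using False assms(2) by (auto simp: nth_alt_lift col_edge_def insert_commute)
qed

lemma alt_cycle_alt_lift:
  assumes "dcycle (\<lambda>i j. (i, \<sigma> j) \<in> B) c" "set c \<subseteq> {..<n}"
    and "inj_on \<sigma> {..<n}" "\<sigma> ` {..<n} \<subseteq> {..<n}"
  shows "alt_cycle n \<sigma> B (alt_lift \<sigma> c) (alt_colours c)"
proof -
  have "distinct (alt_lift \<sigma> c)"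
    using assms by (intro distinct_alt_lift) (auto simp: dcycle_def intro: inj_on_subset)
  moreover have "set (alt_lift \<sigma> c) \<subseteq> bip_vertices n"
    using set_alt_lift[of \<sigma> c] assms(2,4) image_mono[OF assms(2), of \<sigma>]
    unfolding bip_vertices_def by blast
  moreover have "alt_colours c ! ((t + 1) mod (2 * length c)) \<noteq> alt_colours c ! t"
    if "t < 2 * length c" for t
  proof -
    have "(t + 1) mod (2 * length c) < 2 * length c"
      using that by (intro mod_less_divisor) linarith
    then show ?thesis
      using that Suc_mod_double[OF that] by (simp add: alt_colours_def)
  qed
  ultimately show ?thesis
    using assms(1) col_edge_alt_lift[OF assms(1)]
    by (auto simp: alt_cycle_def dcycle_def alt_colours_def)
qed

lemma cycle_edges_subset: "cycle_edges vs cs \<subseteq> UNIV \<times> Pow (set vs)"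
  unfolding cycle_edges_def by (auto intro!: nth_mem mod_less_divisor)

definition left_vertices :: "(bool \<times> (nat + nat) set) set \<Rightarrow> nat set" where
  "left_vertices E = {i. \<exists>col e. (col, e) \<in> E \<and> Inl i \<in> e}"

lemma left_vertices_cycle_edges: "left_vertices (cycle_edges vs cs) = {i. Inl i \<in> set vs}"
proof (intro equalityI subsetI)
  fix i
  assume "i \<in> left_vertices (cycle_edges vs cs)"
  then obtain col e where "(col, e) \<in> cycle_edges vs cs" "Inl i \<in> e"
    unfolding left_vertices_def by blast
  then show "i \<in> {i. Inl i \<in> set vs}"
    using cycle_edges_subset[of vs cs] by auto
next
  fix i
  assume "i \<in> {i. Inl i \<in> set vs}"
  then obtain t where "t < length vs" "vs ! t = Inl i"
    by (auto simp: in_set_conv_nth)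
  then have "(cs ! t, {Inl i, vs ! ((t + 1) mod length vs)}) \<in> cycle_edges vs cs"
    unfolding cycle_edges_def by force
  then show "i \<in> left_vertices (cycle_edges vs cs)"
    unfolding left_vertices_def by blast
qed

lemma long_alt_cycle_of_dcycle:
  assumes "bij_betw \<sigma> {..<n} {..<n}" "dcycle (\<lambda>i j. (i, \<sigma> j) \<in> B) c" "set c \<subseteq> {..<n}"
  defines "E \<equiv> cycle_edges (alt_lift \<sigma> c) (alt_colours c)"
  shows "E \<in> long_alt_cycles n \<sigma> B (2 * length c)" "left_vertices E = set c"
proof -
  have "alt_cycle n \<sigma> B (alt_lift \<sigma> c) (alt_colours c)"
    using assms(1-3) by (intro alt_cycle_alt_lift) (auto simp: bij_betw_def)
  then show "E \<in> long_alt_cycles n \<sigma> B (2 * length c)"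
    unfolding E_def long_alt_cycles_def by force
  show "left_vertices E = set c"
    by (simp add: E_def left_vertices_cycle_edges Inl_in_set_alt_lift_iff)
qed

lemma finite_long_alt_cycles: "finite (long_alt_cycles n \<sigma> B L)"
proof (rule finite_subset)
  show "long_alt_cycles n \<sigma> B L \<subseteq> Pow (UNIV \<times> Pow (bip_vertices n))"
  proof
    fix E
    assume "E \<in> long_alt_cycles n \<sigma> B L"
    then obtain vs cs where "E = cycle_edges vs cs" "set vs \<subseteq> bip_vertices n"
      unfolding long_alt_cycles_def alt_cycle_def by blast
    then show "E \<in> Pow (UNIV \<times> Pow (bip_vertices n))"
      using cycle_edges_subset[of vs cs] by blast
  qed
  show "finite (Pow (UNIV \<times> Pow (bip_vertices n)) :: (bool \<times> (nat + nat) set) set set)"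
    by (simp add: bip_vertices_def)
qed

lemma long_alt_cycles_antimono: "L \<le> L' \<Longrightarrow> long_alt_cycles n \<sigma> B L' \<subseteq> long_alt_cycles n \<sigma> B L"
  unfolding long_alt_cycles_def by force

section \<open>Counting cycles through pair transversals\<close>

lemma card_le_card_mult_fibres:
  assumes "finite X" "finite C" "\<And>x. x \<in> X \<Longrightarrow> \<exists>c\<in>C. R c x"
    and "\<And>c. c \<in> C \<Longrightarrow> card {x \<in> X. R c x} \<le> N"
  shows "card X \<le> card C * N"
proof -
  have "card X \<le> card (\<Union>c\<in>C. {x \<in> X. R c x})"
    using assms(1-3) by (intro card_mono) auto
  also have "\<dots> \<le> (\<Sum>c\<in>C. card {x \<in> X. R c x})"
    by (rule card_UN_le[OF assms(2)])
  also have "\<dots> \<le> card C * N"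
    using assms(4) sum_bounded_above[of C "\<lambda>c. card {x \<in> X. R c x}" N] by simp
  finally show ?thesis .
qed

text \<open>The 2^m sets choosing one vertex from each pair {2j, 2j + 1}, j < m, each carry a long
  cycle, while a cycle through l vertices lies in at most 2^(m - l) of them.\<close>

definition pair_transversal :: "nat \<Rightarrow> nat set \<Rightarrow> nat set" where
  "pair_transversal m A = (\<lambda>j. 2 * j + of_bool (j \<in> A)) ` {..<m}"

lemma mem_pair_transversal: "v \<in> pair_transversal m A \<longleftrightarrow> v < 2 * m \<and> (odd v \<longleftrightarrow> v div 2 \<in> A)"
proof
  assume "v < 2 * m \<and> (odd v \<longleftrightarrow> v div 2 \<in> A)"
  then have "v div 2 < m" "v = 2 * (v div 2) + of_bool (v div 2 \<in> A)"
    by auto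
  then show "v \<in> pair_transversal m A"
    unfolding pair_transversal_def by blast
qed (auto simp: pair_transversal_def)

lemma inj_on_div2_pair_transversal: "inj_on (\<lambda>v. v div 2) (pair_transversal m A)"
  by (rule inj_onI) (auto simp: pair_transversal_def)

lemma card_pair_transversal: "card (pair_transversal m A) = m"
proof -
  have "inj_on (\<lambda>j. 2 * j + of_bool (j \<in> A)) {..<m}"
    by (rule inj_onI) (drule arg_cong[where f = "\<lambda>v. v div 2"], simp)
  then show ?thesis
    by (simp add: pair_transversal_def card_image)
qed

lemma card_pair_transversals_containing:
  "card {A \<in> Pow {..<m}. V \<subseteq> pair_transversal m A} \<le> 2 ^ (m - card V)"
proof (cases "\<exists>A. V \<subseteq> pair_transversal m A")
  case False
  then show ?thesis
    by simp
next
  case True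
  then obtain A1 where A1: "V \<subseteq> pair_transversal m A1"
    by blast
  define J where "J = (\<lambda>v. v div 2) ` V"
  define A0 where "A0 = (\<lambda>v. v div 2) ` {v \<in> V. odd v}"
  \<comment> \<open>a transversal through V is fixed on the pairs J met by V and free elsewhere\<close>
  have "card J = card V"
    unfolding J_def using inj_on_subset[OF inj_on_div2_pair_transversal A1] by (simp add: card_image)
  moreover have "J \<subseteq> {..<m}"
    using A1 unfolding J_def by (auto simp: subset_iff mem_pair_transversal)
  moreover have "inj_on (\<lambda>A. A - J) {A \<in> Pow {..<m}. V \<subseteq> pair_transversal m A}"
  proof (rule inj_onI)
    fix A A'
    assume "A \<in> {A \<in> Pow {..<m}. V \<subseteq> pair_transversal m A}"
      "A' \<in> {A \<in> Pow {..<m}. V \<subseteq> pair_transversal m A}" "A - J = A' - J"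
    moreover from this have "A \<inter> J = A0" "A' \<inter> J = A0"
      by (auto simp: J_def A0_def mem_pair_transversal subset_iff)
    ultimately show "A = A'"
      by blast
  qed
  then have "card {A \<in> Pow {..<m}. V \<subseteq> pair_transversal m A} \<le> card (Pow ({..<m} - J))"
    by (rule card_inj_on_le) auto
  ultimately show ?thesis
    by (simp add: card_Pow card_Diff_subset finite_subset)
qed

lemma long_alt_cycle_in_pair_transversal:
  assumes \<sigma>: "bij_betw \<sigma> {..<n} {..<n}" and joined: "k_joined k {..<n} (\<lambda>i j. (i, \<sigma> j) \<in> B)"
    and "4 * k \<le> n div 2"
  defines "l \<equiv> n div 2 + 3 - 4 * k"
  shows "\<exists>E\<in>long_alt_cycles n \<sigma> B (2 * l).
    l \<le> card (left_vertices E) \<and> left_vertices E \<subseteq> pair_transversal (n div 2) A"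
proof -
  have W: "pair_transversal (n div 2) A \<subseteq> {..<n}"
    by (auto simp: mem_pair_transversal)
  moreover have "finite (pair_transversal (n div 2) A)"
    by (simp add: pair_transversal_def)
  ultimately obtain c where c: "dcycle (\<lambda>i j. (i, \<sigma> j) \<in> B) c" "set c \<subseteq> pair_transversal (n div 2) A"
      "n div 2 + 3 \<le> length c + 4 * k"
    using k_joined_long_cycle k_joined_subset[OF joined W] assms(3) by (metis card_pair_transversal)
  define E where "E = cycle_edges (alt_lift \<sigma> c) (alt_colours c)"
  have "E \<in> long_alt_cycles n \<sigma> B (2 * length c)" "left_vertices E = set c"
    using long_alt_cycle_of_dcycle[OF \<sigma> c(1)] c(2) W unfolding E_def by auto
  moreover have "card (set c) = length c"
    using c(1) by (simp add: dcycle_def distinct_card)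
  moreover have "l \<le> length c"
    using c(3) by (simp add: l_def)
  ultimately have "E \<in> long_alt_cycles n \<sigma> B (2 * l)"
    using long_alt_cycles_antimono[of "2 * l" "2 * length c" n \<sigma> B] by auto
  then show ?thesis
    using \<open>left_vertices E = set c\<close> \<open>card (set c) = length c\<close> \<open>l \<le> length c\<close> c(2)
    by (intro bexI[of _ E]) auto
qed

lemma many_long_alt_cycles:
  fixes L :: real
  assumes \<sigma>: "bij_betw \<sigma> {..<n} {..<n}" and joined: "k_joined k {..<n} (\<lambda>i j. (i, \<sigma> j) \<in> B)"
    and "4 * k \<le> n div 2"
  defines "l \<equiv> n div 2 + 3 - 4 * k"
  assumes L: "L \<le> 2 * real l"
  shows "2 ^ l \<le> card (long_alt_cycles n \<sigma> B L)"
proof -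
  define m where "m = n div 2"
  define C where "C = {E \<in> long_alt_cycles n \<sigma> B (2 * l). l \<le> card (left_vertices E)}"
  have "card (Pow {..<m}) \<le> card C * 2 ^ (m - l)"
  proof (rule card_le_card_mult_fibres[where R = "\<lambda>E A. left_vertices E \<subseteq> pair_transversal m A"])
    show "finite C"
      unfolding C_def using finite_long_alt_cycles by simp
    show "\<exists>E\<in>C. left_vertices E \<subseteq> pair_transversal m A" for A
      using long_alt_cycle_in_pair_transversal[OF assms(1-3), of A] by (auto simp: C_def l_def m_def)
    show "card {A \<in> Pow {..<m}. left_vertices E \<subseteq> pair_transversal m A} \<le> 2 ^ (m - l)"
      if "E \<in> C" for E
      using that card_pair_transversals_containing[of m "left_vertices E"]
      by (auto simp: C_def intro: order_trans power_increasing)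
  qed simp
  moreover have "(2::nat) ^ m = 2 ^ l * 2 ^ (m - l)"
    using k_joined_pos[OF joined] by (simp add: l_def m_def flip: power_add)
  ultimately have "2 ^ l \<le> card C"
    by (simp add: card_Pow)
  also have "\<dots> \<le> card (long_alt_cycles n \<sigma> B L)"
    using long_alt_cycles_antimono[OF L] unfolding C_def
    by (intro card_mono finite_long_alt_cycles) auto
  finally show ?thesis .
qed

section \<open>The random bipartite graph\<close>

lemma pmf_bernoulli_False_le_exp:
  assumes "0 \<le> p"
  shows "pmf (bernoulli_pmf p) False \<le> exp (- p)"
proof (cases "p \<le> 1")
  case True
  then show ?thesis
    using assms exp_ge_add_one_self[of "- p"] by simp
next
  case False
  interpret pmf_as_function .
  have "pmf (bernoulli_pmf p) False = 0"
    using False by transfer simp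
  then show ?thesis
    by simp
qed

lemma prob_bip_ER_no_edges:
  assumes "Q \<subseteq> {..<n} \<times> {..<n}" "0 \<le> D"
  shows "measure_pmf.prob (bip_ER n D) {f. \<forall>x\<in>Q. \<not> f x} \<le> exp (- (D / n)) ^ card Q"
proof -
  define P where "P = {..<n} \<times> {..<(n::nat)}"
  have "{f. \<forall>x\<in>Q. \<not> f x} = Pi P (\<lambda>x. if x \<in> Q then {False} else UNIV)"
    using assms(1) by (auto simp: P_def Pi_def)
  then have "measure_pmf.prob (bip_ER n D) {f. \<forall>x\<in>Q. \<not> f x}
      = (\<Prod>x\<in>P. measure_pmf.prob (bernoulli_pmf (D / n)) (if x \<in> Q then {False} else UNIV))"
    unfolding bip_ER_def P_def by (simp add: measure_Pi_pmf_Pi)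
  also have "\<dots> \<le> (\<Prod>x\<in>P. if x \<in> Q then exp (- (D / n)) else 1)"
    using pmf_bernoulli_False_le_exp[of "D / n"] assms(2)
    by (intro prod_mono) (simp add: measure_pmf_single)
  also have "\<dots> = exp (- (D / n)) ^ card Q"
    using assms(1) by (simp add: prod.If_cases P_def Int_absorb1)
  finally show ?thesis .
qed

lemma prob_bip_ER_not_k_joined:
  assumes "bij_betw \<sigma> {..<n} {..<n}" "0 \<le> D"
  shows "measure_pmf.prob (bip_ER n D) {f. \<not> k_joined k {..<n} (\<lambda>i j. f (i, \<sigma> j))}
           \<le> real (n choose k) ^ 2 * exp (- (D / n)) ^ (k * k)"
proof -
  define K where "K = {S. S \<subseteq> {..<n} \<and> card S = k}"
  define Bad where
    "Bad = (\<lambda>(S :: nat set, T). {f :: nat \<times> nat \<Rightarrow> bool. \<forall>x\<in>S \<times> \<sigma> ` T. \<not> f x})"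
  have "{f. \<not> k_joined k {..<n} (\<lambda>i j. f (i, \<sigma> j))} \<subseteq> (\<Union>ST\<in>K \<times> K. Bad ST)"
  proof
    fix f
    assume "f \<in> {f. \<not> k_joined k {..<n} (\<lambda>i j. f (i, \<sigma> j))}"
    then obtain S T where "S \<in> K" "T \<in> K" "\<forall>s\<in>S. \<forall>t\<in>T. \<not> f (s, \<sigma> t)"
      unfolding k_joined_def K_def by blast
    then show "f \<in> (\<Union>ST\<in>K \<times> K. Bad ST)"
      unfolding Bad_def by blast
  qed
  then have "measure_pmf.prob (bip_ER n D) {f. \<not> k_joined k {..<n} (\<lambda>i j. f (i, \<sigma> j))}
      \<le> measure_pmf.prob (bip_ER n D) (\<Union>ST\<in>K \<times> K. Bad ST)"
    by (intro measure_pmf.finite_measure_mono) simp_all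
  also have "\<dots> \<le> (\<Sum>ST\<in>K \<times> K. measure_pmf.prob (bip_ER n D) (Bad ST))"
    by (intro measure_pmf.finite_measure_subadditive_finite) (simp_all add: K_def)
  also have "\<dots> \<le> (\<Sum>ST\<in>K \<times> K. exp (- (D / n)) ^ (k * k))"
  proof (intro sum_mono)
    fix ST
    assume "ST \<in> K \<times> K"
    then obtain S T where ST: "ST = (S, T)" "S \<subseteq> {..<n}" "T \<subseteq> {..<n}" "card S = k" "card T = k"
      by (auto simp: K_def)
    have "inj_on \<sigma> T"
      using ST(3) assms(1) by (auto simp: bij_betw_def intro: inj_on_subset)
    then have "card (S \<times> \<sigma> ` T) = k * k"
      using ST by (simp add: card_cartesian_product card_image)
    have "S \<times> \<sigma> ` T \<subseteq> {..<n} \<times> {..<n}"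
      using ST assms(1) by (auto simp: bij_betw_def)
    then have "measure_pmf.prob (bip_ER n D) (Bad ST) \<le> exp (- (D / n)) ^ card (S \<times> \<sigma> ` T)"
      unfolding ST(1) Bad_def case_prod_conv by (rule prob_bip_ER_no_edges[OF _ assms(2)])
    with \<open>card (S \<times> \<sigma> ` T) = k * k\<close> show "measure_pmf.prob (bip_ER n D) (Bad ST) \<le> exp (- (D / n)) ^ (k * k)"
      by simp
  qed
  also have "\<dots> = real (n choose k) ^ 2 * exp (- (D / n)) ^ (k * k)"
    by (simp add: K_def card_cartesian_product n_subsets power2_eq_square)
  finally show ?thesis .
qed

lemma prob_ge_one_minus:
  assumes "measure_pmf.prob p {x. \<not> P x} \<le> e" "{x. P x} \<subseteq> A"
  shows "1 - e \<le> measure_pmf.prob p A"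
proof -
  have "measure_pmf.prob p {x. P x} = 1 - measure_pmf.prob p {x. \<not> P x}"
    using measure_pmf.prob_compl[of "{x. \<not> P x}" p] by (simp add: Compl_eq_Diff_UNIV[symmetric] Collect_neg_eq[symmetric])
  moreover have "measure_pmf.prob p {x. P x} \<le> measure_pmf.prob p A"
    using assms(2) by (intro measure_pmf.finite_measure_mono) simp_all
  ultimately show ?thesis
    using assms(1) by linarith
qed

section \<open>Numerical estimates\<close>

lemma power_div_fact_le_exp:
  fixes x :: real
  assumes "0 \<le> x"
  shows "x ^ k / fact k \<le> exp x"
proof -
  have "(\<lambda>j. x ^ j / fact j) sums exp x"
    using exp_converges[of x] by (simp add: divide_inverse mult.commute)
  then show ?thesis
    using assms sum_le_suminf[of "\<lambda>j. x ^ j / fact j" "{k}"] by (simp add: sums_iff)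
qed

lemma binomial_le_exp_mult_pow:
  assumes "0 < k"
  shows "real (n choose k) \<le> (exp 1 * n / k) ^ k"
proof -
  have "real (n choose k) * fact k \<le> real n ^ k"
    using binomial_fact_pow[of n k] by (metis of_nat_fact of_nat_le_iff of_nat_mult of_nat_power)
  then have "real (n choose k) \<le> (n / k) ^ k * (real k ^ k / fact k)"
    using assms by (simp add: power_divide pos_le_divide_eq)
  also have "\<dots> \<le> (n / k) ^ k * exp k"
    by (intro mult_left_mono power_div_fact_le_exp) simp_all
  also have "exp (real k) = exp 1 ^ k"
    using exp_of_nat_mult[of k 1] by simp
  also have "(n / k) ^ k * exp 1 ^ k = (exp 1 * n / k) ^ k"
    by (simp add: power_mult_distrib power_divide)
  finally show ?thesis .
qed

lemma forty_le_exp_7: "40 \<le> exp (7 :: real)"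
proof -
  have "(2 :: real) ^ 7 \<le> exp 1 ^ 7"
    using exp_ge_add_one_self[of 1] by (intro power_mono) simp_all
  then show ?thesis
    using exp_of_nat_mult[of 7 "1 :: real"] by simp
qed

lemma binomial_le_exp_8:
  assumes "n < 40 * k"
  shows "real (n choose k) \<le> exp (8 * real k)"
proof -
  have "0 < k"
    using assms by simp
  then have "real (n choose k) \<le> (exp 1 * n / k) ^ k"
    by (rule binomial_le_exp_mult_pow)
  also have "\<dots> \<le> (exp 1 * exp 7) ^ k"
  proof (intro power_mono mult_left_mono)
    have "real n / real k \<le> 40"
      using assms \<open>0 < k\<close> by (simp add: pos_divide_le_eq)
    then show "exp 1 * real n / real k \<le> exp 1 * exp 7"
      using forty_le_exp_7 by (simp add: mult_left_mono times_divide_eq_right[symmetric] del: times_divide_eq_right)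
  qed simp
  also have "\<dots> = exp (8 * real k)"
    by (simp flip: exp_add exp_of_nat_mult)
  finally show ?thesis .
qed

lemma union_bound_le_exp:
  assumes "0 < n" "n < 40 * k" "1000 \<le> D"
  shows "real (n choose k) ^ 2 * exp (- (D / n)) ^ (k * k) \<le> exp (- D * n / 2 ^ 14)"
proof -
  have nk: "0 < real n" "real n < 40 * real k"
    using assms(1,2) by simp_all
  have "real (n choose k) ^ 2 \<le> exp (8 * real k) ^ 2"
    using binomial_le_exp_8[OF assms(2)] by (intro power_mono) simp_all
  also have "\<dots> = exp (16 * real k)"
    by (simp flip: exp_of_nat_mult)
  finally have "real (n choose k) ^ 2 * exp (- (D / n)) ^ (k * k)
      \<le> exp (16 * real k) * exp (- (D * real k * real k / n))"
    by (intro mult_mono) (simp_all flip: exp_of_nat_mult add: field_simps)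
  also have "\<dots> \<le> exp (- D * n / 2 ^ 14)"
  proof -
    have "D * real k * real n \<le> D * real k * (40 * real k)"
      using nk assms(3) by (intro mult_left_mono) simp_all
    then have "D * real k / 40 \<le> D * real k * real k / n"
      using nk by (simp add: field_simps)
    moreover have "16 * real k + 40 * D * real k / 2 ^ 14 \<le> D * real k / 40"
      using assms(3) nk mult_right_mono[of "16 + 40 * D / 2 ^ 14" "D / 40" "real k"]
      by (simp add: algebra_simps)
    moreover have "D * n / 2 ^ 14 \<le> 40 * D * real k / 2 ^ 14"
      using nk assms(3) by (intro divide_right_mono) simp_all
    ultimately show ?thesis
      by (simp flip: exp_add)
  qed
  finally show ?thesis .
qed

lemma ln_32_exp_1_ge: "13 / 3 \<le> ln (32 * exp 1 :: real)"
proof -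
  have "ln (32 * exp 1 :: real) = 5 * ln 2 + 1"
    using ln_realpow[of 2 5] by (simp add: ln_mult)
  then show ?thesis
    using ln2_ge_two_thirds by simp
qed

lemma long_cycle_parameters:
  fixes n :: nat
  assumes "525 \<le> n"
  defines "k \<equiv> n div 40 + 1"
  defines "l \<equiv> n div 2 + 3 - 4 * k"
  shows "n < 40 * k" "4 * k \<le> n div 2" "3 * real n / 4 \<le> 2 * real l" "exp (real n / 20) \<le> 2 ^ l"
proof -
  show "n < 40 * k" "4 * k \<le> n div 2"
    using assms(1) unfolding k_def by presburger+
  then have l: "real n / 2 - real n / 10 - 3 / 2 \<le> real l"
    unfolding l_def k_def by simp
  then show "3 * real n / 4 \<le> 2 * real l"
    using assms(1) by simp
  have "real l * (2 / 3) \<le> real l * ln 2"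
    using ln2_ge_two_thirds by (intro mult_left_mono) simp_all
  then have "real n / 20 \<le> real l * ln 2"
    using l assms(1) by linarith
  then show "exp (real n / 20) \<le> 2 ^ l"
    by (metis exp_le_cancel_iff exp_ln exp_of_nat_mult zero_less_numeral)
qed

theorem lemma7:
  fixes n :: nat and D :: real and \<sigma> :: "nat \<Rightarrow> nat"
  assumes "bij_betw \<sigma> {..<n} {..<n}"
    and "n \<ge> 525"
    and "D \<ge> 256 * ln (32 * exp 1)"
  shows "measure_pmf.prob (bip_ER n D)
           {f. real (card (long_alt_cycles n \<sigma> {e. f e} (3 * real n / 4))) \<ge> exp (real n / 20)}
         \<ge> 1 - exp (- D * real n / 2 ^ 14)"
proof (rule prob_ge_one_minus)
  define k where "k = n div 40 + 1"
  define l where "l = n div 2 + 3 - 4 * k"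
  note params = long_cycle_parameters[OF assms(2), folded k_def, folded l_def]
  have "1000 \<le> D"
    using assms(3) ln_32_exp_1_ge by linarith
  then show "measure_pmf.prob (bip_ER n D) {f. \<not> k_joined k {..<n} (\<lambda>i j. f (i, \<sigma> j))}
      \<le> exp (- D * real n / 2 ^ 14)"
    using prob_bip_ER_not_k_joined[OF assms(1), of D k] union_bound_le_exp[of n k D] params(1) assms(2)
    by linarith
  show "{f. k_joined k {..<n} (\<lambda>i j. f (i, \<sigma> j))}
      \<subseteq> {f. real (card (long_alt_cycles n \<sigma> {e. f e} (3 * real n / 4))) \<ge> exp (real n / 20)}"
  proof safe
    fix f
    assume "k_joined k {..<n} (\<lambda>i j. f (i, \<sigma> j))"
    then have "k_joined k {..<n} (\<lambda>i j. (i, \<sigma> j) \<in> {e. f e})"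
      by simp
    then have "2 ^ l \<le> card (long_alt_cycles n \<sigma> {e. f e} (3 * real n / 4))"
      unfolding l_def by (rule many_long_alt_cycles[OF assms(1) _ params(2) params(3)[unfolded l_def]])
    then have "real (2 ^ l) \<le> real (card (long_alt_cycles n \<sigma> {e. f e} (3 * real n / 4)))"
      by (rule of_nat_mono)
    then show "exp (real n / 20) \<le> real (card (long_alt_cycles n \<sigma> {e. f e} (3 * real n / 4)))"
      using params(4) by (simp only: of_nat_power of_nat_numeral)
  qed
qed

end
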